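(* Let $V$ be a finite set with $n=|V|$ elements and let $p_v\in[1/n^2,1]$ for each $v\in V$. Define $p=\frac1n\min_{v\in V}p_v$, and for each $v\in V$ define $\bar p_v=\min\{(1+\frac1n)p_v,1\}$, $t_v=\lceil p_v/p\rceil$ and $q_v=1-(1-p)^{t_v}$. Then for every $v\in V$, $$p_v\left(1-\tfrac1e\right)\le q_v\le \bar p_v\le p_v\left(1+\tfrac1n\right).$$ *)

theory Defs
  imports "HOL-Analysis.Analysis"
begin

end

theory Submission
  imports Defs
begin

text \<open>With \<open>t = \<lceil>a/p\<rceil>\<close> trials of success probability \<open>p\<close>, the expected number of
  successes \<open>t p\<close> lies in \<open>[a, a + p)\<close>. Bernoulli's inequality bounds the probability
  \<open>1 - (1 - p)^t\<close> of at least one success from above by \<open>t p < a + p\<close>, and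
  \<open>1 - p \<le> e^-p\<close> bounds it from below by \<open>1 - e^-a\<close>, which by concavity is at least
  \<open>a (1 - 1/e)\<close> for \<open>a \<le> 1\<close>. Finally \<open>p \<le> a/n\<close> when \<open>p\<close> is the minimum divided by \<open>n\<close>;
  the hypothesis \<open>p\<^sub>v \<ge> 1/n\<^sup>2\<close> only serves to make \<open>p\<close> positive.\<close>

lemma one_minus_exp_minus_ge_linear:
  fixes x :: real
  assumes "0 \<le> x" "x \<le> 1"
  shows "x * (1 - 1 / exp 1) \<le> 1 - exp (- x)"
proof -
  have "convex_on UNIV (\<lambda>x::real. exp x)"
    by (intro convex_on_realI[where f' = exp]) (auto intro!: derivative_eq_intros)
  then have "exp ((1 - x) *\<^sub>R 0 + x *\<^sub>R (-1)) \<le> (1 - x) * exp 0 + x * exp (-1)"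
    using assms by (intro convex_onD) auto
  then show ?thesis by (simp add: exp_minus field_simps)
qed

lemma power_one_minus_le_exp:
  fixes p :: real
  assumes "p \<le> 1"
  shows "(1 - p) ^ t \<le> exp (- (p * real t))"
proof -
  have "(1 - p) ^ t \<le> exp (- p) ^ t"
    using assms exp_ge_add_one_self[of "- p"] by (intro power_mono) auto
  also have "\<dots> = exp (- (p * real t))"
    by (metis exp_of_nat_mult mult.commute mult_minus_right)
  finally show ?thesis .
qed

lemma one_minus_power_one_minus_le:
  fixes p :: real
  assumes "0 \<le> p" "p \<le> 1"
  shows "1 - (1 - p) ^ t \<le> p * real t"
  using Bernoulli_inequality[of "- p" t] assms by (simp add: mult.commute)

lemma mult_nat_ceiling_divide_bounds:
  fixes a p :: real
  assumes "0 < p" "0 \<le> a"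
  shows "a \<le> p * real (nat \<lceil>a / p\<rceil>)" "p * real (nat \<lceil>a / p\<rceil>) < a + p"
proof -
  define T where "T = real (nat \<lceil>a / p\<rceil>)"
  have "T = of_int \<lceil>a / p\<rceil>"
    unfolding T_def using assms by simp
  then have "a / p \<le> T" "T < a / p + 1"
    by linarith+
  with assms(1) have "a \<le> p * T" "p * T < a + p"
    by (simp_all add: field_simps)
  then show "a \<le> p * real (nat \<lceil>a / p\<rceil>)" "p * real (nat \<lceil>a / p\<rceil>) < a + p"
    unfolding T_def .
qed

lemma one_minus_power_ceiling_bounds:
  fixes a p :: real
  assumes "0 < p" "p \<le> 1" "0 \<le> a" "a \<le> 1"
  defines "t \<equiv> nat \<lceil>a / p\<rceil>"
  shows "a * (1 - 1 / exp 1) \<le> 1 - (1 - p) ^ t" "1 - (1 - p) ^ t < a + p"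
proof -
  note t_bounds = mult_nat_ceiling_divide_bounds[OF assms(1,3), folded t_def]
  have "exp (- (p * real t)) \<le> exp (- a)"
    using t_bounds(1) by simp
  then have "(1 - p) ^ t \<le> exp (- a)"
    using power_one_minus_le_exp[OF assms(2), of t] by linarith
  then show "a * (1 - 1 / exp 1) \<le> 1 - (1 - p) ^ t"
    using one_minus_exp_minus_ge_linear[OF assms(3,4)] by linarith
  show "1 - (1 - p) ^ t < a + p"
    using one_minus_power_one_minus_le[of p t] assms(1,2) t_bounds(2) by linarith
qed

theorem lemma1:
  fixes V :: "'a set" and pv :: "'a \<Rightarrow> real" and n :: nat and p :: real
  assumes "finite V"
    and "n = card V"
    and "\<And>v. v \<in> V \<Longrightarrow> 1 / (real n)^2 \<le> pv v \<and> pv v \<le> 1"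
    and "p = (1 / real n) * Min (pv ` V)"
    and "v \<in> V"
  shows "pv v * (1 - 1 / exp 1) \<le> 1 - (1 - p) ^ nat \<lceil>pv v / p\<rceil>
       \<and> 1 - (1 - p) ^ nat \<lceil>pv v / p\<rceil> \<le> min ((1 + 1 / real n) * pv v) 1
       \<and> min ((1 + 1 / real n) * pv v) 1 \<le> pv v * (1 + 1 / real n)"
proof -
  have "n > 0"
    using assms(1,2,5) card_gt_0_iff by blast
  then have n: "real n \<ge> 1"
    by simp
  have "Min (pv ` V) \<in> pv ` V"
    using assms(1,5) by (intro Min_in) auto
  then obtain w where w: "w \<in> V" "Min (pv ` V) = pv w"
    by auto
  have min_le: "pv w \<le> pv v"
    using w assms(1,5) by (metis Min_le finite_imageI image_eqI)
  have "0 < 1 / (real n)^2"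
    using n by simp
  then have pw: "0 < pv w" "pv w \<le> 1"
    using assms(3)[OF w(1)] by linarith+
  have pv: "0 \<le> pv v" "pv v \<le> 1"
    using assms(3)[OF assms(5)] min_le pw by linarith+
  have p_eq: "p = pv w / real n"
    using assms(4) w(2) by simp
  have p: "0 < p" "p \<le> 1"
    using p_eq pw n by (simp_all add: divide_le_eq order_trans[of _ 1 "real n"])
  have "p \<le> pv v / real n"
    using p_eq min_le n by (simp add: divide_right_mono)
  then have "pv v + p \<le> (1 + 1 / real n) * pv v"
    by (simp add: algebra_simps)
  moreover have "0 \<le> (1 - p) ^ nat \<lceil>pv v / p\<rceil>"
    using p by simp
  ultimately show ?thesis
    using one_minus_power_ceiling_bounds[OF p pv] by (simp add: mult.commute)
qed

end
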